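(* Let $\Sigma$ be an alphabet with $|\Sigma|\ge 3$. A function $f\colon\Sigma^*\to\Sigma^*$ is congruence preserving if and only if there exist $n\in\mathbb{N}$ and words $w_0,\ldots,w_n\in\Sigma^*$ such that $f(x)=w_0xw_1x\cdots w_{n-1}xw_n$ for all $x\in\Sigma^*$.
   Context: $\Sigma^*$ denotes the free monoid over $\Sigma$: finite words over $\Sigma$ with concatenation, unit the empty word $\varepsilon$. A congruence on $\Sigma^*$ is an equivalence relation $\sim$ such that $u\sim v$ and $u'\sim v'$ imply $uu'\sim vv'$. A function $f\colon(\Sigma^* )^k\to\Sigma^*$ is congruence preserving (CP) if for every congruence $\sim$ on $\Sigma^*$ and all $u_1,\ldots,u_k,v_1,\ldots,v_k\in\Sigma^*$ with $u_i\sim v_i$ for $i=1,\ldots,k$, we have $f(u_1,\ldots,u_k)\sim f(v_1,\ldots,v_k)$. *)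

theory Defs
  imports Main "HOL-Library.Cardinality"
begin

definition congruence :: "('a list \<Rightarrow> 'a list \<Rightarrow> bool) \<Rightarrow> bool" where
  "congruence R \<longleftrightarrow> equivp R \<and>
     (\<forall>u v u' v'. R u v \<longrightarrow> R u' v' \<longrightarrow> R (u @ u') (v @ v'))"

definition congruence_preserving :: "('a list \<Rightarrow> 'a list) \<Rightarrow> bool" where
  "congruence_preserving f \<longleftrightarrow>
     (\<forall>R. congruence R \<longrightarrow> (\<forall>u v. R u v \<longrightarrow> R (f u) (f v)))"

fun interleave :: "'a list list \<Rightarrow> 'a list \<Rightarrow> 'a list" where
  "interleave [] x = []"
| "interleave [w] x = w"
| "interleave (w # ws) x = w @ x @ interleave ws x"

end

theory Submission
  imports Defs
begin

text \<open>
  A letter substitution \<open>u \<mapsto> u[s := w]\<close> is a monoid morphism, so its kernel is a congruence,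
  respected by every congruence preserving function. Hence two congruence preserving functions
  \<open>f\<close>, \<open>g\<close> agreeing on all letters agree on every \<open>x\<close>, by induction on \<open>|x|\<close>: for a letter \<open>e\<close>
  occurring in \<open>x\<close>, erasing \<open>e\<close> shortens \<open>x\<close>; for a letter \<open>e\<close> not occurring in \<open>x\<close>, substituting
  \<open>x\<close> for \<open>e\<close> maps \<open>[e]\<close> to \<open>x\<close>. So \<open>f x\<close> and \<open>g x\<close> have the same image under each of these
  maps, and for three distinct letters these images determine a word. Interleavings are
  congruence preserving, and by the same argument it suffices to match \<open>f\<close> on two letters
  \<open>a\<close>, \<open>b\<close>. Comparing \<open>f [a]\<close>, \<open>f [b]\<close>, \<open>f [c]\<close> through the renamings \<open>b \<mapsto> a\<close>, \<open>c \<mapsto> a\<close>,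
  \<open>c \<mapsto> b\<close> shows that \<open>f [a]\<close> and \<open>f [b]\<close> agree except at positions carrying \<open>a\<close> in \<open>f [a]\<close>
  and \<open>b\<close> in \<open>f [b]\<close>; these positions cut \<open>f [a]\<close> into the words \<open>w\<^sub>i\<close>.
\<close>

definition subst_letter :: "'a \<Rightarrow> 'a list \<Rightarrow> 'a list \<Rightarrow> 'a list" where
  "subst_letter s w X = concat (map (\<lambda>c. if c = s then w else [c]) X)"

lemma subst_letter_Nil [simp]: "subst_letter s w [] = []"
  by (simp add: subst_letter_def)

lemma subst_letter_Cons [simp]:
  "subst_letter s w (c # X) = (if c = s then w else [c]) @ subst_letter s w X"
  by (simp add: subst_letter_def)

lemma subst_letter_append [simp]:
  "subst_letter s w (X @ Y) = subst_letter s w X @ subst_letter s w Y"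
  by (simp add: subst_letter_def)

lemma subst_letter_id: "s \<notin> set X \<Longrightarrow> subst_letter s w X = X"
  by (induction X) auto

lemma set_subst_letter_Nil: "set (subst_letter s [] X) = set X - {s}"
  by (induction X) auto

lemma subst_letter_Nil_idem: "subst_letter s [] (subst_letter s [] X) = subst_letter s [] X"
  by (simp add: subst_letter_id set_subst_letter_Nil)

lemma length_subst_letter_Nil_less:
  "s \<in> set X \<Longrightarrow> length (subst_letter s [] X) < length X"
proof (induction X)
  case (Cons c X)
  have "length (subst_letter s [] X) \<le> length X"
    by (induction X) auto
  with Cons show ?case
    by auto
qed simp

lemma subst_letter_single: "subst_letter s [t] X = map (\<lambda>c. if c = s then t else c) X"
  by (induction X) auto

lemma congruence_kernel:
  assumes "\<And>u v. h (u @ v) = h u @ h v"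
  shows "congruence (\<lambda>u v. h u = h v)"
  using assms unfolding congruence_def
  by (auto intro!: equivpI simp: reflp_def symp_def transp_def)

lemma congruence_preserving_kernel:
  assumes "congruence_preserving f" and "\<And>u v. h (u @ v) = h u @ h v" and "h u = h v"
  shows "h (f u) = h (f v)"
  using assms congruence_kernel unfolding congruence_preserving_def by blast

lemma congruence_preserving_agree_kernel:
  assumes "congruence_preserving f" "congruence_preserving g"
    and "\<And>u v. h (u @ v) = h u @ h v" and "h u = h x" and "f u = g u"
  shows "h (f x) = h (g x)"
  by (metis assms congruence_preserving_kernel)

lemma congruence_preserving_interleave:
  assumes "ws \<noteq> []"
  shows "congruence_preserving (interleave ws)"
  unfolding congruence_preserving_def
proof (intro allI impI)
  fix R :: "'a list \<Rightarrow> 'a list \<Rightarrow> bool" and u v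
  assume R: "congruence R" and uv: "R u v"
  have refl: "R w w" for w
    using R unfolding congruence_def by (meson equivp_reflp)
  have app: "R x y \<Longrightarrow> R x' y' \<Longrightarrow> R (x @ x') (y @ y')" for x y x' y'
    using R unfolding congruence_def by blast
  show "R (interleave ws u) (interleave ws v)"
  proof (induction ws)
    case (Cons w ws)
    then show ?case
      using app refl uv by (cases ws) auto
  qed (simp add: refl)
qed

text \<open>Erasing \<open>p\<close> and erasing \<open>q\<close> cannot tell \<open>p q\<close> from \<open>q p\<close>; the third letter \<open>r\<close> can.\<close>

lemma eq_if_erasures_and_subst_letter_eq:
  assumes "p \<noteq> q" "r \<noteq> p" "r \<noteq> q"
  shows "subst_letter p [] X = subst_letter p [] Y \<Longrightarrow> subst_letter q [] X = subst_letter q [] Y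
    \<Longrightarrow> subst_letter r w X = subst_letter r w Y \<Longrightarrow> X = Y"
proof (induction X arbitrary: Y)
  case Nil
  then show ?case
    using assms by (cases Y) (auto split: if_splits)
next
  case (Cons s X)
  then show ?case
    using assms by (cases Y) (auto split: if_splits)
qed

lemma eq_if_two_subst_letter_eq:
  assumes "q \<noteq> r" "x \<noteq> []" "q \<notin> set x" "r \<notin> set x"
  shows "subst_letter q x X = subst_letter q x Y \<Longrightarrow> subst_letter r x X = subst_letter r x Y
    \<Longrightarrow> X = Y"
proof (induction X arbitrary: Y)
  case Nil
  then show ?case
    using assms by (cases Y) (auto split: if_splits)
next
  case (Cons s X)
  obtain h x' where "x = h # x'"
    using assms(2) by (cases x) auto
  with Cons show ?case
    using assms by (cases Y) (auto split: if_splits)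
qed

lemma eq_if_probes_eq:
  assumes "distinct [a, b, c]"
    and "\<And>e. e \<in> {a, b, c} \<Longrightarrow> subst_letter e (if e \<in> set x then [] else x) X
                                = subst_letter e (if e \<in> set x then [] else x) Y"
  shows "X = Y"
proof -
  have same_side: "X = Y"
    if "distinct [p, q, r]" "{p, q, r} = {a, b, c}" "p \<in> set x \<longleftrightarrow> q \<in> set x" for p q r
  proof -
    have probe: "subst_letter e (if e \<in> set x then [] else x) X
               = subst_letter e (if e \<in> set x then [] else x) Y" if "e \<in> {p, q, r}" for e
      using assms(2) \<open>{p, q, r} = {a, b, c}\<close> that by blast
    consider "x = [] \<or> p \<in> set x \<and> q \<in> set x" | "x \<noteq> []" "p \<notin> set x" "q \<notin> set x"
      using \<open>p \<in> set x \<longleftrightarrow> q \<in> set x\<close> by blast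
    then show ?thesis
    proof cases
      case 1
      then show ?thesis
        using eq_if_erasures_and_subst_letter_eq[of p q r X Y] \<open>distinct [p, q, r]\<close>
          probe[of p] probe[of q] probe[of r] by auto
    next
      case 2
      then show ?thesis
        using eq_if_two_subst_letter_eq[of p q x X Y] \<open>distinct [p, q, r]\<close>
          probe[of p] probe[of q] by auto
    qed
  qed
  show ?thesis
  proof (cases "a \<in> set x \<longleftrightarrow> b \<in> set x")
    case True
    then show ?thesis
      using same_side[of a b c] assms(1) by simp
  next
    case False
    then show ?thesis
      using same_side[of a c b] same_side[of b c a] assms(1) by (auto simp: insert_commute)
  qed
qed

lemma congruence_preserving_eq_if_eq_on_letters:
  fixes f g :: "'a list \<Rightarrow> 'a list" and a b c :: 'a
  assumes f: "congruence_preserving f" and g: "congruence_preserving g"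
    and "distinct [a, b, c]" and letters: "\<And>e. f [e] = g [e]"
  shows "f x = g x"
proof (induction x rule: length_induct)
  case (1 x)
  have "subst_letter e (if e \<in> set x then [] else x) (f x)
      = subst_letter e (if e \<in> set x then [] else x) (g x)" for e
  proof (cases "e \<in> set x")
    case True
    have "f (subst_letter e [] x) = g (subst_letter e [] x)"
      using 1 length_subst_letter_Nil_less[OF True] by blast
    then have "subst_letter e [] (f x) = subst_letter e [] (g x)"
      using congruence_preserving_agree_kernel[OF f g, of "subst_letter e []" "subst_letter e [] x" x]
      by (simp add: subst_letter_Nil_idem)
    with True show ?thesis
      by simp
  next
    case False
    then have "subst_letter e x x = x"
      by (rule subst_letter_id)
    then have "subst_letter e x (f x) = subst_letter e x (g x)"
      using congruence_preserving_agree_kernel[OF f g, of "subst_letter e x" "[e]" x] letters by simp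
    with False show ?thesis
      by simp
  qed
  then show ?case
    by (rule eq_if_probes_eq[OF \<open>distinct [a, b, c]\<close>, where X = "f x" and Y = "g x"])
qed

lemma congruence_preserving_eq_on_letters_if_eq_on_two:
  assumes f: "congruence_preserving f" and g: "congruence_preserving g"
    and "a \<noteq> b" and "f [a] = g [a]" and "f [b] = g [b]"
  shows "f [e] = g [e]"
proof (cases "e = a \<or> e = b")
  case True
  then show ?thesis
    using assms by auto
next
  case False
  have "subst_letter s [e] (f [e]) = subst_letter s [e] (g [e])" if "s \<in> {a, b}" for s
    using congruence_preserving_agree_kernel[OF f g, of "subst_letter s [e]" "[s]" "[e]"]
      that False assms(4,5) by auto
  then show ?thesis
    using eq_if_two_subst_letter_eq[of a b "[e]"] \<open>a \<noteq> b\<close> False by auto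
qed

lemma ex_interleave_if_pointwise:
  assumes "list_all2 (\<lambda>\<alpha> \<beta>. \<alpha> = \<beta> \<or> \<alpha> = a \<and> \<beta> = b) A B"
  shows "\<exists>ws. ws \<noteq> [] \<and> interleave ws [a] = A \<and> interleave ws [b] = B"
  using assms
proof (induction rule: list_all2_induct)
  case Nil
  show ?case
    by (intro exI[of _ "[[]]"]) auto
next
  case (Cons \<alpha> A \<beta> B)
  then obtain ws where ws: "ws \<noteq> []" "interleave ws [a] = A" "interleave ws [b] = B"
    by blast
  show ?case
  proof (cases "\<alpha> = \<beta>")
    case True
    have "interleave ((\<alpha> # hd ws) # tl ws) x = \<alpha> # interleave ws x" for x
      using ws(1) by (cases ws; cases "tl ws") auto
    then show ?thesis
      using ws True by (intro exI[of _ "(\<alpha> # hd ws) # tl ws"]) auto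
  next
    case False
    have "interleave ([] # ws) x = x @ interleave ws x" for x
      using ws(1) by (cases ws) auto
    then show ?thesis
      using ws False Cons.hyps(1) by (intro exI[of _ "[] # ws"]) auto
  qed
qed

lemma ex_interleave_eq_on_two_letters:
  assumes f: "congruence_preserving f" and "distinct [a, b, c]"
  shows "\<exists>ws. ws \<noteq> [] \<and> f [a] = interleave ws [a] \<and> f [b] = interleave ws [b]"
proof -
  define rename :: "'a \<Rightarrow> 'a \<Rightarrow> 'a \<Rightarrow> 'a" where "rename s t = (\<lambda>e. if e = s then t else e)" for s t
  have renaming: "map (rename s t) (f [s]) = map (rename s t) (f [t])" for s t
    using congruence_preserving_kernel[OF f, of "subst_letter s [t]" "[s]" "[t]"]
    by (simp add: subst_letter_single rename_def)
  let ?A = "f [a]" and ?B = "f [b]" and ?C = "f [c]"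
  have len: "length ?A = length ?B" "length ?A = length ?C"
    using renaming[of b a, THEN arg_cong[of _ _ length]]
      renaming[of c a, THEN arg_cong[of _ _ length]] by simp_all
  have "?A ! i = ?B ! i \<or> ?A ! i = a \<and> ?B ! i = b" if "i < length ?A" for i
  proof -
    have "rename b a (?A ! i) = rename b a (?B ! i)" "rename c a (?A ! i) = rename c a (?C ! i)"
      "rename c b (?B ! i) = rename c b (?C ! i)"
      using renaming[of b a, THEN arg_cong[of _ _ "\<lambda>l. l ! i"]]
        renaming[of c a, THEN arg_cong[of _ _ "\<lambda>l. l ! i"]]
        renaming[of c b, THEN arg_cong[of _ _ "\<lambda>l. l ! i"]] that len by simp_all
    then show ?thesis
      using \<open>distinct [a, b, c]\<close> by (auto simp: rename_def split: if_splits)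
  qed
  then show ?thesis
    using ex_interleave_if_pointwise[of a b ?A ?B] len by (auto simp: list_all2_conv_all_nth)
qed

lemma three_distinct_letters:
  assumes "CARD('a::finite) \<ge> 3"
  obtains a b c :: "'a::finite" where "distinct [a, b, c]"
proof -
  obtain S :: "'a set" where "card S = 3"
    using obtain_subset_with_card_n[OF assms] by blast
  then show ?thesis
    using that by (auto simp: card_3_iff)
qed

theorem mainTheorem2:
  fixes f :: "'a::finite list \<Rightarrow> 'a list"
  assumes "CARD('a) \<ge> 3"
  shows "congruence_preserving f \<longleftrightarrow>
    (\<exists>ws :: 'a list list. ws \<noteq> [] \<and> (\<forall>x. f x = interleave ws x))"
proof
  assume f: "congruence_preserving f"
  obtain a b c :: 'a where abc: "distinct [a, b, c]"
    using three_distinct_letters[OF assms] by blast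
  then obtain ws where ws: "ws \<noteq> []" "f [a] = interleave ws [a]" "f [b] = interleave ws [b]"
    using ex_interleave_eq_on_two_letters[OF f] by blast
  note g = congruence_preserving_interleave[OF ws(1)]
  have "f [e] = interleave ws [e]" for e
    using congruence_preserving_eq_on_letters_if_eq_on_two[OF f g _ ws(2,3)] abc by simp
  then have "f x = interleave ws x" for x
    using congruence_preserving_eq_if_eq_on_letters[OF f g abc] by blast
  with ws(1) show "\<exists>ws. ws \<noteq> [] \<and> (\<forall>x. f x = interleave ws x)"
    by blast
next
  assume "\<exists>ws :: 'a list list. ws \<noteq> [] \<and> (\<forall>x. f x = interleave ws x)"
  then obtain ws where "ws \<noteq> []" "f = interleave ws"
    by blast
  then show "congruence_preserving f"
    using congruence_preserving_interleave by blast
qed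

end
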